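(* Let Assumptions (A) hold, $\ell>0$, $x_0\in\mathcal H^s_\cap$. Then for every fixed $T>0$, $$\mathbb E_{x_0}\int_0^T\big|A_\ell(\bar S^{(N)}(v))-A_\ell(S^{(N)}(v))\big|^2\,dv\longrightarrow0\quad\text{as }N\to\infty.$$
   Context: $\mathcal H$, $\mathcal C$, $\phi_j$, $\lambda_j^2$, $x^j=\langle x,\phi_j\rangle$, $\mathcal H^r$ (norm $\|x\|_r^2=\sum_jj^{2r}(x^j)^2$) as usual. Assumptions (A): (1) $\lambda_j\asymp j^{-\kappa}$, $\kappa>1/2$; (2) $\Psi:\mathcal H^s\to\mathbb R$ defined everywhere, $s\in[0,\kappa-1/2)$; (3) $0\le\Psi(x)\lesssim1+\|x\|_s^2$; (4) $\|\nabla\Psi(x)\|_{-s}\lesssim1+\|x\|_s$, $\|\partial^2\Psi(x)\|_{\mathcal L(\mathcal H^s,\mathcal H^{-s})}\lesssim1$. With $\Phi$ the standard normal cdf: for $x>0$, $D_\ell(x)=2\ell^2e^{\ell^2(x-1)}\Phi(\ell(1-2x)/\sqrt{2x})$, $\Gamma_\ell(x)=D_\ell(x)+2\ell^2\Phi(-\ell/\sqrt{2x})$, $A_\ell(x)=-2xD_\ell(x)+\Gamma_\ell(x)$; at $0$ all equal $2\ell^2e^{-\ell^2}$. RWM chain started at $x_0$: given $x_k$, $\xi^N_{k+1}=\sum_{i\le N}\xi^{i,N}_{k+1}\phi_i$ (i.i.d. $\mathcal N(0,1)$), $y_{k+1}=x_k+\sqrt{2\ell^2/N}\mathcal C^{1/2}\xi^N_{k+1}$,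 $Q_k=\frac12\sum_{i\le N}|x^i_k|^2/\lambda_i^2-\frac12\sum_{i\le N}|y^i_{k+1}|^2/\lambda_i^2+\Psi(x^N_k)-\Psi(y^N_{k+1})$, $\gamma_{k+1}\sim$ Bernoulli$(1\wedge e^{Q_k})$, $x_{k+1}=x_k+\gamma_{k+1}\sqrt{2\ell^2/N}\mathcal C^{1/2}\xi^N_{k+1}$. $S^N_k=\frac1N\sum_{i\le N}|x^i_k|^2/\lambda_i^2$; for $k/N\le t<(k+1)/N$: $\bar S^{(N)}(t)=S^N_k$, $S^{(N)}(t)=(Nt-k)S^N_{k+1}+(k+1-Nt)S^N_k$. $\mathbb E_{x_0}$: expectation for the chain from $x_0$. $\mathcal H^s_\cap=\{x\in\mathcal H^s:\lim_N\frac1N\sum_{i\le N}|x^i|^2/\lambda_i^2\text{ exists and is finite}\}$. *)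

theory Defs
  imports "HOL-Probability.Probability"
begin

text \<open>Coordinates: a point x of H is represented by its coordinate sequence
  x :: nat => real, where x j is the coefficient along phi_(j+1) (0-based shift).\<close>

definition Hs_sq :: "real \<Rightarrow> (nat \<Rightarrow> real) \<Rightarrow> real" where
  "Hs_sq r x = (\<Sum>j. (real (Suc j)) powr (2 * r) * (x j)\<^sup>2)"

definition in_Hs :: "real \<Rightarrow> (nat \<Rightarrow> real) \<Rightarrow> bool" where
  "in_Hs r x \<longleftrightarrow> summable (\<lambda>j. (real (Suc j)) powr (2 * r) * (x j)\<^sup>2)"

definition Hs_norm :: "real \<Rightarrow> (nat \<Rightarrow> real) \<Rightarrow> real" where
  "Hs_norm r x = sqrt (Hs_sq r x)"

definition in_Hs_cap :: "real \<Rightarrow> (nat \<Rightarrow> real) \<Rightarrow> (nat \<Rightarrow> real) \<Rightarrow> bool" where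
  "in_Hs_cap s lam x \<longleftrightarrow> in_Hs s x \<and>
     convergent (\<lambda>N. (1 / real N) * (\<Sum>i<N. (x i)\<^sup>2 / (lam i)\<^sup>2))"

definition proj :: "nat \<Rightarrow> (nat \<Rightarrow> real) \<Rightarrow> (nat \<Rightarrow> real)" where
  "proj N x = (\<lambda>i. if i < N then x i else 0)"

definition Hs_linear :: "real \<Rightarrow> ((nat \<Rightarrow> real) \<Rightarrow> real) \<Rightarrow> bool" where
  "Hs_linear s L \<longleftrightarrow> (\<forall>h k a b. in_Hs s h \<longrightarrow> in_Hs s k \<longrightarrow>
       L (\<lambda>i. a * h i + b * k i) = a * L h + b * L k)"

text \<open>Psi is twice Frechet differentiable on H^s, with first derivative DPsi x
  (a bounded linear functional on H^s, i.e. the gradient in H^{-s}) and second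
  derivative D2Psi x (a bounded bilinear form on H^s, i.e. an element of
  L(H^s, H^{-s})), with the growth bounds of Assumption (A)(4) with constant K.\<close>
definition A4 :: "real \<Rightarrow> ((nat \<Rightarrow> real) \<Rightarrow> real) \<Rightarrow> real \<Rightarrow> bool" where
  "A4 s Psi K \<longleftrightarrow> (\<exists>DPsi D2Psi.
     (\<forall>x. in_Hs s x \<longrightarrow>
        Hs_linear s (DPsi x) \<and>
        (\<forall>h. in_Hs s h \<longrightarrow> \<bar>DPsi x h\<bar> \<le> K * (1 + Hs_norm s x) * Hs_norm s h) \<and>
        (\<forall>h. in_Hs s h \<longrightarrow> Hs_linear s (D2Psi x h)) \<and>
        (\<forall>k. in_Hs s k \<longrightarrow> Hs_linear s (\<lambda>h. D2Psi x h k)) \<and>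
        (\<forall>h k. in_Hs s h \<longrightarrow> in_Hs s k \<longrightarrow>
            \<bar>D2Psi x h k\<bar> \<le> K * Hs_norm s h * Hs_norm s k) \<and>
        (\<forall>e>0. \<exists>d>0. \<forall>h. in_Hs s h \<longrightarrow> Hs_norm s h < d \<longrightarrow>
            \<bar>Psi (\<lambda>i. x i + h i) - Psi x - DPsi x h\<bar> \<le> e * Hs_norm s h) \<and>
        (\<forall>e>0. \<exists>d>0. \<forall>h. in_Hs s h \<longrightarrow> Hs_norm s h < d \<longrightarrow>
            (\<forall>k. in_Hs s k \<longrightarrow>
              \<bar>DPsi (\<lambda>i. x i + h i) k - DPsi x k - D2Psi x h k\<bar>
                 \<le> e * Hs_norm s h * Hs_norm s k))))"

definition assumptions_A :: "real \<Rightarrow> (nat \<Rightarrow> real) \<Rightarrow> real \<Rightarrow> ((nat \<Rightarrow> real) \<Rightarrow> real) \<Rightarrow> bool" where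
  "assumptions_A kappa lam s Psi \<longleftrightarrow>
     kappa > 1/2 \<and> (\<forall>j. lam j > 0) \<and>
     (\<exists>c1 c2. 0 < c1 \<and> 0 < c2 \<and> (\<forall>j. c1 * real (Suc j) powr (- kappa) \<le> lam j \<and>
                                        lam j \<le> c2 * real (Suc j) powr (- kappa))) \<and>
     0 \<le> s \<and> s < kappa - 1/2 \<and>
     (\<exists>K. \<forall>x. in_Hs s x \<longrightarrow> 0 \<le> Psi x \<and> Psi x \<le> K * (1 + Hs_sq s x)) \<and>
     (\<exists>K. A4 s Psi K)"

definition Phi :: "real \<Rightarrow> real" where
  "Phi x = measure (density lborel (\<lambda>t. ennreal (std_normal_density t))) {..x}"

definition D_l :: "real \<Rightarrow> real \<Rightarrow> real" where
  "D_l l x = (if x = 0 then 2 * l\<^sup>2 * exp (- l\<^sup>2)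
     else 2 * l\<^sup>2 * exp (l\<^sup>2 * (x - 1)) * Phi (l * (1 - 2 * x) / sqrt (2 * x)))"

definition Gamma_l :: "real \<Rightarrow> real \<Rightarrow> real" where
  "Gamma_l l x = (if x = 0 then 2 * l\<^sup>2 * exp (- l\<^sup>2)
     else D_l l x + 2 * l\<^sup>2 * Phi (- l / sqrt (2 * x)))"

definition A_l :: "real \<Rightarrow> real \<Rightarrow> real" where
  "A_l l x = (if x = 0 then 2 * l\<^sup>2 * exp (- l\<^sup>2)
     else - 2 * x * D_l l x + Gamma_l l x)"

text \<open>One RWM step / the chain, driven by given noise values:
  xi k i = xi^{i,N}_k (coordinate i, 0-based) and u k a uniform variable,
  gamma_{k+1} = [u (k+1) < 1 \<and> e^{Q_k}], which is Bernoulli(1 \<and> e^{Q_k}).\<close>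
definition rwm_prop :: "(nat \<Rightarrow> real) \<Rightarrow> real \<Rightarrow> nat \<Rightarrow> (nat \<Rightarrow> real) \<Rightarrow> (nat \<Rightarrow> real) \<Rightarrow> (nat \<Rightarrow> real)" where
  "rwm_prop lam l N xi x = (\<lambda>i. if i < N then x i + sqrt (2 * l\<^sup>2 / real N) * lam i * xi i else x i)"

definition rwm_Q :: "(nat \<Rightarrow> real) \<Rightarrow> ((nat \<Rightarrow> real) \<Rightarrow> real) \<Rightarrow> nat \<Rightarrow> (nat \<Rightarrow> real) \<Rightarrow> (nat \<Rightarrow> real) \<Rightarrow> real" where
  "rwm_Q lam Psi N x y =
     1/2 * (\<Sum>i<N. (x i)\<^sup>2 / (lam i)\<^sup>2) - 1/2 * (\<Sum>i<N. (y i)\<^sup>2 / (lam i)\<^sup>2)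
     + Psi (proj N x) - Psi (proj N y)"

primrec rwm_chain :: "(nat \<Rightarrow> real) \<Rightarrow> ((nat \<Rightarrow> real) \<Rightarrow> real) \<Rightarrow> real \<Rightarrow> nat \<Rightarrow> (nat \<Rightarrow> real)
    \<Rightarrow> (nat \<Rightarrow> nat \<Rightarrow> real) \<Rightarrow> (nat \<Rightarrow> real) \<Rightarrow> nat \<Rightarrow> (nat \<Rightarrow> real)" where
  "rwm_chain lam Psi l N x0 xi u 0 = x0"
| "rwm_chain lam Psi l N x0 xi u (Suc k) =
     (let x = rwm_chain lam Psi l N x0 xi u k;
          y = rwm_prop lam l N (xi (Suc k)) x
      in if u (Suc k) < min 1 (exp (rwm_Q lam Psi N x y)) then y else x)"

definition S_N :: "(nat \<Rightarrow> real) \<Rightarrow> nat \<Rightarrow> (nat \<Rightarrow> real) \<Rightarrow> real" where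
  "S_N lam N x = (1 / real N) * (\<Sum>i<N. (x i)\<^sup>2 / (lam i)\<^sup>2)"

definition Sbar :: "nat \<Rightarrow> (nat \<Rightarrow> real) \<Rightarrow> real \<Rightarrow> real" where
  "Sbar N Sk t = Sk (nat \<lfloor>real N * t\<rfloor>)"

definition Sinterp :: "nat \<Rightarrow> (nat \<Rightarrow> real) \<Rightarrow> real \<Rightarrow> real" where
  "Sinterp N Sk t = (let k = nat \<lfloor>real N * t\<rfloor> in
      (real N * t - real k) * Sk (Suc k) + (real k + 1 - real N * t) * Sk k)"

end

(* A_l is 1/2-Hoelder continuous on [0, oo): in the variable u = sqrt (2 x) it is Lipschitz,
   its derivative being bounded for large u thanks to the Mills-ratio bounds for Phi.  Hence the
   squared interpolation error on [k/N, (k+1)/N) is at most C |S_(k+1) - S_k|, and the integral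
   over [0, T] is at most C/N times the sum of |S_(k+1) - S_k| over k <= N T.  Whatever the
   accept/reject decisions, N (S_(k+1) - S_k) is either 0 or a quadratic expression in the Gaussian
   innovations whose square has expectation O(N) (Cauchy-Schwarz and independence), so each
   increment is O(N^(-1/2)) in mean and the expected error is O((T + 1) N^(-1/2)). *)

theory Submission
  imports Defs "HOL-Real_Asymp.Real_Asymp"
begin

section \<open>The standard normal distribution function\<close>

lemma nonneg_if_nonincreasing_tendsto_zero:
  fixes f f' :: "real \<Rightarrow> real"
  assumes lim: "(f \<longlongrightarrow> 0) at_top"
    and deriv: "\<And>x. w \<le> x \<Longrightarrow> (f has_real_derivative f' x) (at x)"
    and nonpos: "\<And>x. w \<le> x \<Longrightarrow> f' x \<le> 0"
  shows "0 \<le> f w"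
proof -
  have "f v \<le> f w" if "w \<le> v" for v
    using that deriv nonpos by (intro DERIV_nonpos_imp_nonincreasing[OF that]) auto
  then show ?thesis
    by (intro tendsto_upperbound[OF lim]) (auto intro: eventually_at_top_linorderI[of w])
qed

lemma continuous_on_std_normal_density: "continuous_on A std_normal_density"
  unfolding std_normal_density_def by (intro continuous_intros) auto

lemma std_normal_density_pos: "0 < std_normal_density t"
  by (simp add: normal_density_pos)

lemma std_normal_density_le_1: "std_normal_density t \<le> 1"
proof -
  have "exp (- t\<^sup>2 / 2) \<le> 1" by simp
  moreover have "1 \<le> sqrt (2 * pi)" using pi_gt3 by simp
  ultimately have "exp (- t\<^sup>2 / 2) \<le> sqrt (2 * pi)" by linarith
  then show ?thesis
    unfolding std_normal_density_def by (simp add: field_simps)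
qed

lemma std_normal_density_uminus: "std_normal_density (- t) = std_normal_density t"
  by (simp add: std_normal_density_def)

lemma std_normal_density_has_real_derivative:
  "(std_normal_density has_real_derivative (- t * std_normal_density t)) (at t)"
  unfolding std_normal_density_def[abs_def] std_normal_density_def
  by (auto intro!: derivative_eq_intros simp: field_simps power2_eq_square)

lemma Phi_eq_cdf: "Phi = cdf std_normal_distribution"
  unfolding Phi_def cdf_def by (rule ext) simp

lemma Phi_nonneg: "0 \<le> Phi x" and Phi_le_1: "Phi x \<le> 1"
proof -
  interpret real_distribution std_normal_distribution by (rule real_dist_normal_dist)
  show "0 \<le> Phi x" "Phi x \<le> 1" unfolding Phi_eq_cdf using cdf_nonneg cdf_bounded_prob by auto
qed

lemma tendsto_Phi_at_top: "(Phi \<longlongrightarrow> 1) at_top"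
proof -
  interpret real_distribution std_normal_distribution by (rule real_dist_normal_dist)
  show ?thesis unfolding Phi_eq_cdf using cdf_lim_at_top_prob .
qed

lemma tendsto_Phi_at_bot: "(Phi \<longlongrightarrow> 0) at_bot"
proof -
  interpret real_distribution std_normal_distribution by (rule real_dist_normal_dist)
  show ?thesis unfolding Phi_eq_cdf using cdf_lim_at_bot .
qed

lemma Phi_diff_eq_integral:
  assumes "a \<le> b"
  shows "Phi b - Phi a = integral {a..b} std_normal_density"
proof -
  interpret real_distribution std_normal_distribution by (rule real_dist_normal_dist)
  have si: "set_integrable lborel {a..b} std_normal_density"
    by (rule borel_integrable_atLeastAtMost') (rule continuous_on_std_normal_density)
  have "Phi b - Phi a = measure std_normal_distribution {a<..b}"
    using cdf_diff_eq[of a b] assms unfolding Phi_eq_cdf by (cases "a = b") auto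
  also have "\<dots> = enn2real (\<integral>\<^sup>+x. ennreal (std_normal_density x) * indicator {a<..b} x \<partial>lborel)"
    unfolding measure_def by (subst emeasure_density) auto
  also have "(\<integral>\<^sup>+x. ennreal (std_normal_density x) * indicator {a<..b} x \<partial>lborel)
      = (\<integral>\<^sup>+x. ennreal (indicator {a..b} x * std_normal_density x) \<partial>lborel)"
    using AE_lborel_singleton[of a]
    by (intro nn_integral_cong_AE, eventually_elim) (auto simp: indicator_def)
  also have "\<dots> = ennreal (LINT x:{a..b}|lborel. std_normal_density x)"
    using si unfolding set_integrable_def set_lebesgue_integral_def
    by (subst nn_integral_eq_integral) (auto simp: indicator_def)
  also have "(LINT x:{a..b}|lborel. std_normal_density x) = integral {a..b} std_normal_density"
    by (rule set_borel_integral_eq_integral[OF si])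
  finally show ?thesis
    using integral_nonneg[OF set_borel_integral_eq_integral(1)[OF si]] by simp
qed

lemma Phi_has_real_derivative: "(Phi has_real_derivative std_normal_density x) (at x)"
proof -
  let ?g = "\<lambda>u. Phi (x - 1) + integral {x - 1..u} std_normal_density"
  have "(?g has_real_derivative std_normal_density x) (at x within {x - 1<..<x + 1})"
    using integral_has_real_derivative[OF continuous_on_std_normal_density, of x "x - 1" "x + 1"]
    by (auto intro!: derivative_eq_intros intro: DERIV_subset)
  moreover have "at x within {x - 1<..<x + 1} = at x" by (rule at_within_open) auto
  ultimately have "(?g has_real_derivative std_normal_density x) (at x)" by simp
  then show ?thesis
    by (rule has_field_derivative_transform_within_open[of _ _ _ "{x - 1<..<x + 1}"])
       (auto simp: Phi_diff_eq_integral[symmetric])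
qed

lemma Phi_uminus_has_real_derivative:
  "((\<lambda>w. Phi (- w)) has_real_derivative (- std_normal_density w)) (at w)"
proof -
  have "(uminus has_real_derivative -1) (at w)" by (auto intro!: derivative_eq_intros)
  from DERIV_chain'[OF this Phi_has_real_derivative] show ?thesis
    by (simp add: std_normal_density_uminus)
qed

lemma tendsto_Phi_uminus_at_top: "((\<lambda>w. Phi (- w)) \<longlongrightarrow> 0) at_top"
  using filterlim_compose[OF tendsto_Phi_at_bot filterlim_uminus_at_bot_at_top] by (simp add: o_def)

lemma Mills_ratio_upper:
  assumes "w > 0"
  shows "Phi (- w) \<le> std_normal_density w / w"
proof -
  let ?f = "\<lambda>w. std_normal_density w / w - Phi (- w)"
  let ?f' = "\<lambda>x. ((- x * std_normal_density x) * x - std_normal_density x) / (x * x) + std_normal_density x"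
  have "((\<lambda>w. std_normal_density w / w) \<longlongrightarrow> 0) at_top"
    unfolding std_normal_density_def by real_asymp
  then have "(?f \<longlongrightarrow> 0) at_top"
    using tendsto_diff[OF _ tendsto_Phi_uminus_at_top] by simp
  moreover have "(?f has_real_derivative ?f' x) (at x)" if "w \<le> x" for x
    using that assms std_normal_density_has_real_derivative Phi_uminus_has_real_derivative
    by (auto intro!: derivative_eq_intros)
  moreover have "?f' x \<le> 0" if "w \<le> x" for x
    using that assms std_normal_density_pos[of x] by (simp add: field_simps)
  ultimately have "0 \<le> ?f w" by (rule nonneg_if_nonincreasing_tendsto_zero)
  then show ?thesis by simp
qed

lemma Mills_ratio_lower:
  assumes "w > 0"
  shows "std_normal_density w * (1 / w - 1 / w ^ 3) \<le> Phi (- w)"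
proof -
  let ?f = "\<lambda>w. Phi (- w) - std_normal_density w * (1 / w - 1 / w ^ 3)"
  have "((\<lambda>w. std_normal_density w * (1 / w - 1 / w ^ 3)) \<longlongrightarrow> 0) at_top"
    unfolding std_normal_density_def by real_asymp
  from tendsto_diff[OF tendsto_Phi_uminus_at_top this] have "(?f \<longlongrightarrow> 0) at_top" by simp
  moreover have "(?f has_real_derivative - 3 * std_normal_density x / x ^ 4) (at x)" if "w \<le> x" for x
  proof -
    have "x > 0" using that assms by simp
    have "((\<lambda>w. 1 / w - 1 / w ^ 3) has_real_derivative (- 1 / x\<^sup>2 + 3 / x ^ 4)) (at x)"
      using \<open>x > 0\<close> by (auto intro!: derivative_eq_intros simp: field_simps power2_eq_square
          power3_eq_cube numeral_eq_Suc)
    from DERIV_diff[OF Phi_uminus_has_real_derivative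
        DERIV_mult[OF std_normal_density_has_real_derivative this]]
    show ?thesis
      using \<open>x > 0\<close> by (simp add: field_simps power2_eq_square power3_eq_cube numeral_eq_Suc)
  qed
  moreover have "- 3 * std_normal_density x / x ^ 4 \<le> 0" for x
    using std_normal_density_pos[of x] by (simp add: zero_le_even_power)
  ultimately have "0 \<le> ?f w" by (rule nonneg_if_nonincreasing_tendsto_zero)
  then show ?thesis by simp
qed

section \<open>Hoelder continuity of \<open>A_l\<close>\<close>

text \<open>\<open>A_u l u = A_l l (u\<^sup>2 / 2)\<close> for \<open>u > 0\<close>: \<open>A_l\<close> in the variable \<open>u = sqrt (2 * x)\<close>,
  in which it is Lipschitz.\<close>

definition A_u :: "real \<Rightarrow> real \<Rightarrow> real" where
  "A_u l u = 2 * l\<^sup>2 * ((1 - u\<^sup>2) * exp (l\<^sup>2 * (u\<^sup>2 / 2 - 1)) * Phi (l / u - l * u) + Phi (- l / u))"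

definition A_u' :: "real \<Rightarrow> real \<Rightarrow> real" where
  "A_u' l u = 2 * l\<^sup>2 * ((- 2 * u + l\<^sup>2 * u - l\<^sup>2 * u ^ 3) * exp (l\<^sup>2 * (u\<^sup>2 / 2 - 1))
      * Phi (l / u - l * u) + l * u\<^sup>2 * std_normal_density (l / u))"

lemma A_l_eq_A_u:
  assumes "x > 0"
  shows "A_l l x = A_u l (sqrt (2 * x))"
proof -
  define u where "u = sqrt (2 * x)"
  have u: "u > 0" "u\<^sup>2 = 2 * x" using assms by (auto simp: u_def)
  have su: "sqrt (2 * x) = u" by (simp add: u_def)
  have arg1: "l * (1 - 2 * x) / sqrt (2 * x) = l / u - l * u"
    unfolding su u(2)[symmetric] using u(1) by (simp add: field_simps power2_eq_square)
  have arg2: "l\<^sup>2 * (x - 1) = l\<^sup>2 * (u\<^sup>2 / 2 - 1)" using u by simp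
  have arg3: "- l / sqrt (2 * x) = - l / u" by (simp add: su)
  have "A_l l x = A_u l u"
    unfolding A_l_def Gamma_l_def D_l_def arg1 arg2 arg3 using assms u(2)
    by (simp add: A_u_def algebra_simps flip: u(2))
  then show ?thesis by (simp add: su)
qed

lemma exp_mult_std_normal_density_shift:
  assumes "u > 0"
  shows "exp (l\<^sup>2 * (u\<^sup>2 / 2 - 1)) * std_normal_density (l / u - l * u) = std_normal_density (l / u)"
proof -
  have "(l / u - l * u)\<^sup>2 = (l / u)\<^sup>2 - 2 * l\<^sup>2 + l\<^sup>2 * u\<^sup>2"
    using assms by (simp add: power2_eq_square field_simps)
  then have "l\<^sup>2 * (u\<^sup>2 / 2 - 1) + (- (l / u - l * u)\<^sup>2 / 2) = - (l / u)\<^sup>2 / 2"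
    by (simp add: field_simps)
  then show ?thesis
    unfolding std_normal_density_def by (simp add: exp_add[symmetric])
qed

lemma A_u_has_real_derivative:
  assumes "u > 0"
  shows "(A_u l has_real_derivative A_u' l u) (at u)"
proof -
  let ?E = "\<lambda>u. exp (l\<^sup>2 * (u\<^sup>2 / 2 - 1))"
  let ?n = std_normal_density
  have dE: "(?E has_real_derivative l\<^sup>2 * u * ?E u) (at u)"
    by (auto intro!: derivative_eq_intros simp: field_simps)
  have dw: "((\<lambda>u. l / u - l * u) has_real_derivative (- l / u\<^sup>2 - l)) (at u)"
    using assms by (auto intro!: derivative_eq_intros simp: field_simps power2_eq_square)
  have dP: "((\<lambda>u. Phi (l / u - l * u)) has_real_derivative ?n (l / u - l * u) * (- l / u\<^sup>2 - l)) (at u)"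
    using DERIV_chain'[OF dw Phi_has_real_derivative] by (simp add: mult.commute)
  have dv: "((\<lambda>u. - l / u) has_real_derivative (l / u\<^sup>2)) (at u)"
    using assms by (auto intro!: derivative_eq_intros simp: field_simps power2_eq_square)
  have dQ: "((\<lambda>u. Phi (- l / u)) has_real_derivative ?n (- l / u) * (l / u\<^sup>2)) (at u)"
    using DERIV_chain'[OF dv Phi_has_real_derivative] by (simp add: mult.commute)
  have d1: "((\<lambda>u. 1 - u\<^sup>2) has_real_derivative - 2 * u) (at u)"
    by (auto intro!: derivative_eq_intros)
  have "(A_u l has_real_derivative 2 * l\<^sup>2 * (((- 2 * u * ?E u + l\<^sup>2 * u * ?E u * (1 - u\<^sup>2))
      * Phi (l / u - l * u) + ?n (l / u - l * u) * (- l / u\<^sup>2 - l) * ((1 - u\<^sup>2) * ?E u))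
      + ?n (- l / u) * (l / u\<^sup>2))) (at u)"
    unfolding A_u_def by (rule DERIV_cmult[OF DERIV_add[OF DERIV_mult[OF DERIV_mult[OF d1 dE] dP] dQ]])
  moreover have Y: "?n (l / u - l * u) * (- l / u\<^sup>2 - l) * ((1 - u\<^sup>2) * ?E u) + ?n (- l / u) * (l / u\<^sup>2)
      = l * u\<^sup>2 * ?n (l / u)"
  proof -
    have "?n (- l / u) = ?n (l / u)" using std_normal_density_uminus[of "l / u"] by simp
    then have "?n (l / u - l * u) * (- l / u\<^sup>2 - l) * ((1 - u\<^sup>2) * ?E u) + ?n (- l / u) * (l / u\<^sup>2)
        = (1 - u\<^sup>2) * (- l / u\<^sup>2 - l) * (?E u * ?n (l / u - l * u)) + ?n (l / u) * (l / u\<^sup>2)"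
      by (simp only: mult_ac)
    also have "\<dots> = (l * u\<^sup>2 - l / u\<^sup>2) * ?n (l / u) + ?n (l / u) * (l / u\<^sup>2)"
    proof -
      have "(1 - u\<^sup>2) * (- l / u\<^sup>2 - l) = l * u\<^sup>2 - l / u\<^sup>2"
        using assms by (simp add: field_simps power2_eq_square)
      then show ?thesis by (simp only: exp_mult_std_normal_density_shift[OF assms])
    qed
    also have "\<dots> = l * u\<^sup>2 * ?n (l / u)"
      by (simp add: algebra_simps)
    finally show ?thesis .
  qed
  moreover have X: "- 2 * u * ?E u + l\<^sup>2 * u * ?E u * (1 - u\<^sup>2) = (- 2 * u + l\<^sup>2 * u - l\<^sup>2 * u ^ 3) * ?E u"
    by (simp add: algebra_simps power3_eq_cube power2_eq_square)
  ultimately show ?thesis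
    unfolding A_u'_def add.assoc Y X by (simp add: algebra_simps)
qed

text \<open>For large \<open>u\<close> the two terms of \<open>A_u' l u\<close> are individually unbounded; writing the
  first one through the Mills ratio \<open>R\<close> at \<open>w = l * u - l / u\<close>, their leading parts cancel.\<close>

lemma Mills_ratio_cancellation:
  fixes l u w R :: real
  assumes l: "l > 0" and u: "u \<ge> 2" and w: "w = l * u - l / u"
    and R1: "1 / w - 1 / w ^ 3 \<le> R" and R2: "R \<le> 1 / w"
  shows "\<bar>(- 2 * u + l\<^sup>2 * u - l\<^sup>2 * u ^ 3) * R + l * u\<^sup>2\<bar> \<le> 8 / (3 * l) + 2 * (1 + l\<^sup>2) / l ^ 3"
proof -
  define q where "q = u\<^sup>2 - 1"
  have "u\<^sup>2 \<ge> 2\<^sup>2" by (rule power_mono) (use u in auto)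
  then have q3: "q \<ge> 3" by (simp add: q_def)
  have upos: "u > 0" using u by simp
  have wq: "w = l * q / u" using upos by (simp add: w q_def field_simps power2_eq_square)
  define c where "c = - 2 * u + l\<^sup>2 * u - l\<^sup>2 * u ^ 3"
  have cq: "c = - u * (2 + l\<^sup>2 * q)" by (simp add: c_def q_def algebra_simps power2_eq_square power3_eq_cube)
  have cneg: "c \<le> 0" using cq upos l q3 by (simp add: mult_nonneg_nonneg)
  have cancel: "c / w + l * u\<^sup>2 = - 2 * u\<^sup>2 / (l * q)"
    using l q3 upos unfolding cq wq by (simp add: field_simps power2_eq_square)
  have uq: "u\<^sup>2 / q \<le> 4 / 3" using q3 by (simp add: q_def field_simps)
  have lower: "c * R + l * u\<^sup>2 \<ge> - 8 / (3 * l)"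
  proof -
    have "c * R + l * u\<^sup>2 \<ge> - 2 * u\<^sup>2 / (l * q)"
      using mult_left_mono_neg[OF R2 cneg] cancel by simp
    moreover have "- 2 / l * (u\<^sup>2 / q) \<ge> - 2 / l * (4 / 3)"
      by (rule mult_left_mono_neg[OF uq]) (use l in simp)
    ultimately show ?thesis by simp
  qed
  have upper: "c * R + l * u\<^sup>2 \<le> 2 * (1 + l\<^sup>2) / l ^ 3"
  proof -
    have "c * R + l * u\<^sup>2 \<le> - 2 * u\<^sup>2 / (l * q) - c / w ^ 3"
      using mult_left_mono_neg[OF R1 cneg] cancel by (simp add: algebra_simps)
    also have "\<dots> \<le> - c / w ^ 3" using l q3 by simp
    also have "- c / w ^ 3 = (u\<^sup>2)\<^sup>2 * (2 + l\<^sup>2 * q) / (l ^ 3 * q ^ 3)"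
      unfolding cq wq using upos l q3 by (simp add: field_simps power2_eq_square power3_eq_cube)
    also have "\<dots> \<le> (16 / 9 * q\<^sup>2) * (2 + l\<^sup>2 * q) / (l ^ 3 * q ^ 3)"
    proof (rule divide_right_mono, rule mult_right_mono)
      have "(u\<^sup>2)\<^sup>2 = (q + 1)\<^sup>2" by (simp add: q_def)
      also have "\<dots> \<le> (4 / 3 * q)\<^sup>2" by (rule power_mono) (use q3 in auto)
      finally show "(u\<^sup>2)\<^sup>2 \<le> 16 / 9 * q\<^sup>2" by (simp add: power2_eq_square)
    qed (use l q3 in auto)
    also have "\<dots> = 16 / 9 * (2 / q + l\<^sup>2) / l ^ 3"
      using l q3 by (simp add: field_simps power2_eq_square power3_eq_cube)
    also have "\<dots> \<le> 16 / 9 * (1 + l\<^sup>2) / l ^ 3"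
      using l q3 by (intro divide_right_mono mult_left_mono add_right_mono) (auto simp: field_simps)
    also have "\<dots> \<le> 2 * (1 + l\<^sup>2) / l ^ 3"
      using l by (intro divide_right_mono mult_right_mono) auto
    finally show ?thesis .
  qed
  have "0 \<le> 8 / (3 * l)" "0 \<le> 2 * (1 + l\<^sup>2) / l ^ 3" using l by auto
  then show ?thesis
    unfolding c_def[symmetric] using lower upper by (intro abs_leI) linarith+
qed

lemma A_u'_bounded_near_zero:
  assumes l: "l > 0" and u: "0 < u" "u \<le> 2"
  shows "\<bar>A_u' l u\<bar> \<le> 2 * l\<^sup>2 * ((4 + 10 * l\<^sup>2) * exp (l\<^sup>2) + 4 * l)"
proof -
  let ?c = "- 2 * u + l\<^sup>2 * u - l\<^sup>2 * u ^ 3"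
  let ?E = "exp (l\<^sup>2 * (u\<^sup>2 / 2 - 1))"
  let ?P = "Phi (l / u - l * u)"
  have "\<bar>?c\<bar> \<le> 2 * u + l\<^sup>2 * u + l\<^sup>2 * u ^ 3" using u by (simp add: abs_le_iff)
  also have "\<dots> \<le> 2 * 2 + l\<^sup>2 * 2 + l\<^sup>2 * 2 ^ 3"
    using u by (intro add_mono mult_left_mono power_mono) auto
  finally have c: "\<bar>?c\<bar> \<le> 4 + 10 * l\<^sup>2" by simp
  have u2: "u\<^sup>2 \<le> 2\<^sup>2" using u by (intro power_mono) auto
  then have "l\<^sup>2 * (u\<^sup>2 / 2 - 1) \<le> l\<^sup>2" by (intro mult_left_le) auto
  then have E: "?E \<le> exp (l\<^sup>2)" by simp
  have t1: "\<bar>?c * ?E * ?P\<bar> \<le> (4 + 10 * l\<^sup>2) * exp (l\<^sup>2) * 1"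
    unfolding abs_mult using c E Phi_nonneg Phi_le_1 by (intro mult_mono) auto
  have t2: "\<bar>l * u\<^sup>2 * std_normal_density (l / u)\<bar> \<le> l * 2\<^sup>2 * 1"
    unfolding abs_mult using l u2 std_normal_density_le_1 std_normal_density_pos
    by (intro mult_mono) (auto simp: less_imp_le)
  have "\<bar>?c * ?E * ?P + l * u\<^sup>2 * std_normal_density (l / u)\<bar> \<le> (4 + 10 * l\<^sup>2) * exp (l\<^sup>2) + 4 * l"
    using t1 t2 abs_triangle_ineq[of "?c * ?E * ?P"] by simp
  then show ?thesis
    unfolding A_u'_def by (simp add: abs_mult mult_left_mono)
qed

lemma A_u'_bounded_away_from_zero:
  assumes l: "l > 0" and u: "u \<ge> 2"
  shows "\<bar>A_u' l u\<bar> \<le> 2 * l\<^sup>2 * (8 / (3 * l) + 2 * (1 + l\<^sup>2) / l ^ 3)"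
proof -
  let ?c = "- 2 * u + l\<^sup>2 * u - l\<^sup>2 * u ^ 3"
  let ?E = "exp (l\<^sup>2 * (u\<^sup>2 / 2 - 1))"
  let ?K = "std_normal_density (l / u)"
  define w where "w = l * u - l / u"
  have "l / u < l * u"
    using l u by (simp add: field_simps) (smt (verit) mult_less_cancel_left1 mult_pos_pos)
  then have w: "w > 0" by (simp add: w_def)
  have K: "0 < ?K" "?K \<le> 1" using std_normal_density_pos std_normal_density_le_1 by auto
  have EK: "?E * std_normal_density w = ?K"
    using exp_mult_std_normal_density_shift[of u l] std_normal_density_uminus[of w] u
    by (simp add: w_def)
  define R where "R = ?E * Phi (- w) / ?K"
  have ER: "?E * Phi (- w) = ?K * R" using K by (simp add: R_def)
  have "?K * (1 / w - 1 / w ^ 3) \<le> ?K * R"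
    using mult_left_mono[OF Mills_ratio_lower[OF w], of ?E] unfolding ER EK[symmetric]
    by (simp add: mult.assoc)
  then have R1: "1 / w - 1 / w ^ 3 \<le> R" using K by simp
  have "?K * R \<le> ?K * (1 / w)"
    using mult_left_mono[OF Mills_ratio_upper[OF w], of ?E] unfolding ER EK[symmetric]
    by (simp add: mult.assoc)
  then have R2: "R \<le> 1 / w" using K by (metis mult_le_cancel_left_pos)
  have "Phi (l / u - l * u) = Phi (- w)" by (simp add: w_def)
  then have "A_u' l u = 2 * l\<^sup>2 * (?c * (?E * Phi (- w)) + l * u\<^sup>2 * ?K)"
    unfolding A_u'_def by (simp only: mult.assoc)
  also have "\<dots> = 2 * l\<^sup>2 * (?K * (?c * R + l * u\<^sup>2))"
    unfolding ER by (simp add: algebra_simps)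
  also have "\<bar>\<dots>\<bar> \<le> 2 * l\<^sup>2 * (1 * (8 / (3 * l) + 2 * (1 + l\<^sup>2) / l ^ 3))"
    unfolding abs_mult using K Mills_ratio_cancellation[OF l u w_def R1 R2]
    by (intro mult_left_mono mult_mono) auto
  finally show ?thesis by simp
qed

lemma A_u'_bounded:
  assumes "l > 0"
  obtains B where "\<And>u. u > 0 \<Longrightarrow> \<bar>A_u' l u\<bar> \<le> B"
proof
  fix u :: real assume "u > 0"
  then show "\<bar>A_u' l u\<bar> \<le> max (2 * l\<^sup>2 * ((4 + 10 * l\<^sup>2) * exp (l\<^sup>2) + 4 * l))
      (2 * l\<^sup>2 * (8 / (3 * l) + 2 * (1 + l\<^sup>2) / l ^ 3))"
    using A_u'_bounded_near_zero[OF assms] A_u'_bounded_away_from_zero[OF assms]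
    by (cases "u \<le> 2") (auto simp: le_max_iff_disj)
qed

lemma A_u_lipschitz:
  assumes B: "\<And>u. u > 0 \<Longrightarrow> \<bar>A_u' l u\<bar> \<le> B" and a: "0 < a" and b: "0 < b"
  shows "\<bar>A_u l a - A_u l b\<bar> \<le> B * \<bar>a - b\<bar>"
proof -
  have lip: "\<bar>A_u l y - A_u l x\<bar> \<le> B * (y - x)" if "0 < x" "x < y" for x y
  proof -
    obtain z where z: "x < z" "z < y" "A_u l y - A_u l x = (y - x) * A_u' l z"
      using MVT2[OF \<open>x < y\<close>, of "A_u l" "A_u' l"] A_u_has_real_derivative \<open>0 < x\<close> by force
    then show ?thesis
      using B[of z] \<open>0 < x\<close> by (simp add: abs_mult mult.commute mult_left_mono)
  qed
  consider "a < b" | "a = b" | "b < a" by linarith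
  then show ?thesis
  proof cases
    case 1
    then show ?thesis using lip[of a b] a by (simp add: abs_minus_commute)
  next
    case 3
    then show ?thesis using lip[of b a] b by simp
  qed simp
qed

lemma tendsto_A_u_at_right_0:
  assumes l: "l > 0"
  shows "(A_u l \<longlongrightarrow> 2 * l\<^sup>2 * exp (- l\<^sup>2)) (at_right 0)"
proof -
  have "filterlim (\<lambda>u. l / u - l * u) at_top (at_right (0::real))" using l by real_asymp
  from filterlim_compose[OF tendsto_Phi_at_top this]
  have P1: "((\<lambda>u. Phi (l / u - l * u)) \<longlongrightarrow> 1) (at_right 0)" by (simp add: o_def)
  have "filterlim (\<lambda>u. - l / u) at_bot (at_right (0::real))" using l by real_asymp
  from filterlim_compose[OF tendsto_Phi_at_bot this]
  have P2: "((\<lambda>u. Phi (- l / u)) \<longlongrightarrow> 0) (at_right 0)" by (simp add: o_def)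
  have "(A_u l \<longlongrightarrow> 2 * l\<^sup>2 * ((1 - 0\<^sup>2) * exp (l\<^sup>2 * (0\<^sup>2 / 2 - 1)) * 1 + 0)) (at_right 0)"
    unfolding A_u_def by (intro tendsto_intros P1 P2) auto
  then show ?thesis by simp
qed

lemma A_l_lipschitz_in_sqrt:
  assumes l: "l > 0" and B: "\<And>u. u > 0 \<Longrightarrow> \<bar>A_u' l u\<bar> \<le> B" and x: "0 \<le> x" and y: "0 \<le> y"
  shows "\<bar>A_l l x - A_l l y\<bar> \<le> B * \<bar>sqrt (2 * x) - sqrt (2 * y)\<bar>"
proof -
  have at_0: "\<bar>A_l l 0 - A_u l v\<bar> \<le> B * v" if v: "v > 0" for v
  proof -
    have "((\<lambda>u. \<bar>A_u l u - A_u l v\<bar>) \<longlongrightarrow> \<bar>2 * l\<^sup>2 * exp (- l\<^sup>2) - A_u l v\<bar>) (at_right 0)"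
      by (intro tendsto_intros tendsto_A_u_at_right_0 l)
    moreover have "((\<lambda>u. B * \<bar>u - v\<bar>) \<longlongrightarrow> B * \<bar>0 - v\<bar>) (at_right 0)"
      by (intro tendsto_intros)
    moreover have "eventually (\<lambda>u. \<bar>A_u l u - A_u l v\<bar> \<le> B * \<bar>u - v\<bar>) (at_right 0)"
      using eventually_at_right_less[of 0] by eventually_elim (rule A_u_lipschitz[OF B _ v])
    ultimately have "\<bar>2 * l\<^sup>2 * exp (- l\<^sup>2) - A_u l v\<bar> \<le> B * \<bar>0 - v\<bar>"
      by (intro tendsto_le[OF trivial_limit_at_right_real]) 
    then show ?thesis using v by (simp add: A_l_def)
  qed
  consider "x = 0" "y = 0" | "x = 0" "y > 0" | "x > 0" "y = 0" | "x > 0" "y > 0"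
    using x y by linarith
  then show ?thesis
  proof cases
    case 2
    then show ?thesis using at_0[of "sqrt (2 * y)"] A_l_eq_A_u[of y] by simp
  next
    case 3
    then show ?thesis
      using at_0[of "sqrt (2 * x)"] A_l_eq_A_u[of x] by (simp add: abs_minus_commute)
  next
    case 4
    then show ?thesis using A_u_lipschitz[OF B] A_l_eq_A_u[of x] A_l_eq_A_u[of y] by simp
  qed simp
qed

lemma sq_sqrt_diff_le_abs_diff:
  assumes "0 \<le> a" "0 \<le> b"
  shows "(sqrt a - sqrt b)\<^sup>2 \<le> \<bar>a - b\<bar>"
proof -
  have "(sqrt a - sqrt b)\<^sup>2 = \<bar>sqrt a - sqrt b\<bar> * \<bar>sqrt a - sqrt b\<bar>"
    by (simp add: power2_eq_square abs_mult_self_eq)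
  also have "\<dots> \<le> \<bar>sqrt a - sqrt b\<bar> * (sqrt a + sqrt b)"
    using assms by (intro mult_left_mono abs_leI) auto
  also have "\<dots> = \<bar>(sqrt a - sqrt b) * (sqrt a + sqrt b)\<bar>" using assms by (simp add: abs_mult)
  also have "(sqrt a - sqrt b) * (sqrt a + sqrt b) = a - b" using assms by (simp add: algebra_simps)
  finally show ?thesis .
qed

lemma A_l_half_Holder:
  assumes l: "l > 0"
  obtains C where "C \<ge> 0" "\<And>x y. 0 \<le> x \<Longrightarrow> 0 \<le> y \<Longrightarrow> (A_l l x - A_l l y)\<^sup>2 \<le> C * \<bar>x - y\<bar>"
proof -
  obtain B where B: "\<And>u. u > 0 \<Longrightarrow> \<bar>A_u' l u\<bar> \<le> B" using A_u'_bounded[OF l] by blast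
  have "(A_l l x - A_l l y)\<^sup>2 \<le> 2 * B\<^sup>2 * \<bar>x - y\<bar>" if x: "0 \<le> x" and y: "0 \<le> y" for x y
  proof -
    have "(A_l l x - A_l l y)\<^sup>2 \<le> (B * \<bar>sqrt (2 * x) - sqrt (2 * y)\<bar>)\<^sup>2"
      using A_l_lipschitz_in_sqrt[OF l B x y] by (metis abs_ge_zero power2_abs power_mono)
    also have "\<dots> \<le> B\<^sup>2 * \<bar>2 * x - 2 * y\<bar>"
      using sq_sqrt_diff_le_abs_diff[of "2 * x" "2 * y"] x y
      by (simp add: power_mult_distrib mult_left_mono)
    also have "\<bar>2 * x - 2 * y\<bar> = 2 * \<bar>x - y\<bar>" by (simp add: abs_if)
    finally show ?thesis by (simp add: mult_ac)
  qed
  then show ?thesis using that[of "2 * B\<^sup>2"] by simp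
qed

section \<open>Increments of the RWM chain\<close>

lemma rwm_chain_coordinates:
  "\<exists>\<gamma>::nat \<Rightarrow> real. (\<forall>j. \<gamma> j \<in> {0, 1}) \<and>
     (\<forall>i<N. rwm_chain lam Psi l N x0 xi u k i
        = x0 i + sqrt (2 * l\<^sup>2 / real N) * lam i * (\<Sum>j\<in>{1..k}. \<gamma> j * xi j i))"
proof (induction k)
  case 0
  show ?case by (intro exI[of _ "\<lambda>_. 0"]) simp
next
  case (Suc k)
  then obtain \<gamma> :: "nat \<Rightarrow> real" where \<gamma>: "\<forall>j. \<gamma> j \<in> {0, 1}"
    and x: "\<forall>i<N. rwm_chain lam Psi l N x0 xi u k i
        = x0 i + sqrt (2 * l\<^sup>2 / real N) * lam i * (\<Sum>j\<in>{1..k}. \<gamma> j * xi j i)"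
    by blast
  let ?x = "rwm_chain lam Psi l N x0 xi u k"
  define accept
    where "accept = (u (Suc k) < min 1 (exp (rwm_Q lam Psi N ?x (rwm_prop lam l N (xi (Suc k)) ?x))))"
  define \<gamma>' where "\<gamma>' = \<gamma>(Suc k := if accept then 1 else 0)"
  have "(\<Sum>j\<in>{1..Suc k}. \<gamma>' j * xi j i) = (\<Sum>j\<in>{1..k}. \<gamma> j * xi j i) + \<gamma>' (Suc k) * xi (Suc k) i" for i
    by (simp add: \<gamma>'_def add.commute)
  moreover have "rwm_chain lam Psi l N x0 xi u (Suc k)
      = (if accept then rwm_prop lam l N (xi (Suc k)) ?x else ?x)"
    by (simp add: accept_def Let_def)
  ultimately have "\<forall>i<N. rwm_chain lam Psi l N x0 xi u (Suc k) i
      = x0 i + sqrt (2 * l\<^sup>2 / real N) * lam i * (\<Sum>j\<in>{1..Suc k}. \<gamma>' j * xi j i)"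
    using x by (auto simp: rwm_prop_def \<gamma>'_def algebra_simps)
  moreover have "\<forall>j. \<gamma>' j \<in> {0, 1}" using \<gamma> by (simp add: \<gamma>'_def)
  ultimately show ?case by blast
qed

lemma S_N_rwm_chain_Suc_cases:
  "S_N lam N (rwm_chain lam Psi l N x0 xi u (Suc k)) = S_N lam N (rwm_chain lam Psi l N x0 xi u k) \<or>
   S_N lam N (rwm_chain lam Psi l N x0 xi u (Suc k)) =
     S_N lam N (rwm_prop lam l N (xi (Suc k)) (rwm_chain lam Psi l N x0 xi u k))"
  by (simp add: Let_def)

lemma S_N_rwm_prop_diff:
  assumes lam: "\<And>i. lam i > 0" and N: "N > 0"
  shows "real N * (S_N lam N (rwm_prop lam l N e x) - S_N lam N x)
    = 2 * sqrt (2 * l\<^sup>2 / real N) * (\<Sum>i<N. x i / lam i * e i)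
      + (sqrt (2 * l\<^sup>2 / real N))\<^sup>2 * (\<Sum>i<N. (e i)\<^sup>2)"
proof -
  let ?c = "sqrt (2 * l\<^sup>2 / real N)"
  have "(rwm_prop lam l N e x i)\<^sup>2 / (lam i)\<^sup>2 - (x i)\<^sup>2 / (lam i)\<^sup>2
      = 2 * ?c * (x i / lam i * e i) + ?c\<^sup>2 * (e i)\<^sup>2" if "i < N" for i
    using that lam[of i] unfolding rwm_prop_def by (simp add: field_simps power2_eq_square)
  then show ?thesis
    using N by (simp del: real_sqrt_pow2 add: S_N_def right_diff_distrib sum.distrib sum_distrib_left
        flip: sum_subtractf)
qed

text \<open>A bound for \<open>(N (S\<^sup>N\<^sub>k\<^sub>+\<^sub>1 - S\<^sup>N\<^sub>k))\<^sup>2\<close> in terms of the Gaussian innovations alone, uniform over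
  all accept/reject decisions, so that the acceptance step never has to be analysed.\<close>

definition increment_majorant :: "real \<Rightarrow> nat \<Rightarrow> real \<Rightarrow> (nat \<Rightarrow> nat \<Rightarrow> real) \<Rightarrow> nat \<Rightarrow> real" where
  "increment_majorant l N a xi k =
     16 * (2 * l\<^sup>2 / real N) * a * (\<Sum>i<N. (xi (Suc k) i)\<^sup>2)
     + 16 * (2 * l\<^sup>2 / real N)\<^sup>2 * real k * (\<Sum>j\<in>{1..k}. (\<Sum>i<N. xi j i * xi (Suc k) i)\<^sup>2)
     + 2 * (2 * l\<^sup>2 / real N)\<^sup>2 * real N * (\<Sum>i<N. (xi (Suc k) i) ^ 4)"

lemma increment_majorant_nonneg: "0 \<le> a \<Longrightarrow> 0 \<le> increment_majorant l N a xi k"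
  unfolding increment_majorant_def
  by (intro add_nonneg_nonneg mult_nonneg_nonneg sum_nonneg) (auto simp: zero_le_even_power)

lemma sq_add_le: "((x::real) + y)\<^sup>2 \<le> 2 * x\<^sup>2 + 2 * y\<^sup>2"
  using sum_squares_ge_zero[of "x - y" 0] by (simp add: power2_eq_square algebra_simps)

lemma Cauchy_Schwarz_increment_bound:
  fixes a e \<gamma> Q :: "nat \<Rightarrow> real"
  assumes J: "finite J" and \<gamma>: "\<forall>j. \<gamma> j \<in> {0, 1}"
  shows "(2 * c * ((\<Sum>i<N. a i * e i) + c * (\<Sum>j\<in>J. \<gamma> j * Q j)) + c\<^sup>2 * (\<Sum>i<N. (e i)\<^sup>2))\<^sup>2
    \<le> 16 * c\<^sup>2 * (\<Sum>i<N. (a i)\<^sup>2) * (\<Sum>i<N. (e i)\<^sup>2)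
      + 16 * (c\<^sup>2)\<^sup>2 * real (card J) * (\<Sum>j\<in>J. (Q j)\<^sup>2) + 2 * (c\<^sup>2)\<^sup>2 * real N * (\<Sum>i<N. (e i) ^ 4)"
proof -
  define P where "P = (\<Sum>i<N. a i * e i) + c * (\<Sum>j\<in>J. \<gamma> j * Q j)"
  define V where "V = (\<Sum>i<N. (e i)\<^sup>2)"
  have cs1: "(\<Sum>i<N. a i * e i)\<^sup>2 \<le> (\<Sum>i<N. (a i)\<^sup>2) * V"
    unfolding V_def by (rule Cauchy_Schwarz_ineq_sum)
  have cs2: "(\<Sum>j\<in>J. \<gamma> j * Q j)\<^sup>2 \<le> real (card J) * (\<Sum>j\<in>J. (Q j)\<^sup>2)"
  proof -
    have "(\<Sum>j\<in>J. \<gamma> j * Q j)\<^sup>2 \<le> (\<Sum>j\<in>J. (\<gamma> j)\<^sup>2) * (\<Sum>j\<in>J. (Q j)\<^sup>2)"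
      by (rule Cauchy_Schwarz_ineq_sum)
    moreover have "(\<gamma> j)\<^sup>2 \<le> 1" for j
      using \<gamma> by (metis insert_iff one_power2 order_refl power_zero_numeral singletonD zero_le_one)
    then have "(\<Sum>j\<in>J. (\<gamma> j)\<^sup>2) \<le> real (card J)"
      using sum_mono[of J "\<lambda>j. (\<gamma> j)\<^sup>2" "\<lambda>_. 1"] by simp
    ultimately show ?thesis
      by (smt (verit) mult_right_mono sum_nonneg zero_le_power2)
  qed
  have cs3: "V\<^sup>2 \<le> real N * (\<Sum>i<N. (e i) ^ 4)"
    using Cauchy_Schwarz_ineq_sum[of "\<lambda>_. 1" "\<lambda>i. (e i)\<^sup>2" "{..<N}"]
    unfolding V_def by (simp flip: power_mult)
  have "(2 * c * ((\<Sum>i<N. a i * e i) + c * (\<Sum>j\<in>J. \<gamma> j * Q j)) + c\<^sup>2 * (\<Sum>i<N. (e i)\<^sup>2))\<^sup>2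
      = (2 * c * P + c\<^sup>2 * V)\<^sup>2"
    unfolding P_def V_def ..
  also have "\<dots> \<le> 2 * (2 * c * P)\<^sup>2 + 2 * (c\<^sup>2 * V)\<^sup>2"
    by (rule sq_add_le)
  also have "\<dots> = 8 * c\<^sup>2 * P\<^sup>2 + 2 * (c\<^sup>2)\<^sup>2 * V\<^sup>2"
    by algebra
  also have "P\<^sup>2 \<le> 2 * (\<Sum>i<N. a i * e i)\<^sup>2 + 2 * c\<^sup>2 * (\<Sum>j\<in>J. \<gamma> j * Q j)\<^sup>2"
    unfolding P_def using sq_add_le[of "\<Sum>i<N. a i * e i" "c * (\<Sum>j\<in>J. \<gamma> j * Q j)"]
    by (simp add: power_mult_distrib mult.assoc)
  also have "\<dots> \<le> 2 * ((\<Sum>i<N. (a i)\<^sup>2) * V) + 2 * c\<^sup>2 * (real (card J) * (\<Sum>j\<in>J. (Q j)\<^sup>2))"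
    using cs1 cs2 by (intro add_mono mult_left_mono) auto
  also have "V\<^sup>2 \<le> real N * (\<Sum>i<N. (e i) ^ 4)"
    by (rule cs3)
  also have "8 * c\<^sup>2 * (2 * ((\<Sum>i<N. (a i)\<^sup>2) * V) + 2 * c\<^sup>2 * (real (card J) * (\<Sum>j\<in>J. (Q j)\<^sup>2)))
      + 2 * (c\<^sup>2)\<^sup>2 * (real N * (\<Sum>i<N. (e i) ^ 4))
    = 16 * c\<^sup>2 * (\<Sum>i<N. (a i)\<^sup>2) * (\<Sum>i<N. (e i)\<^sup>2)
      + 16 * (c\<^sup>2)\<^sup>2 * real (card J) * (\<Sum>j\<in>J. (Q j)\<^sup>2) + 2 * (c\<^sup>2)\<^sup>2 * real N * (\<Sum>i<N. (e i) ^ 4)"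
    unfolding V_def by (simp add: algebra_simps power2_eq_square)
  finally show ?thesis
    by (simp add: mult_left_mono)
qed

lemma S_N_rwm_chain_increment_sq_le:
  assumes lam: "\<And>i. lam i > 0" and N: "N > 0"
  shows "(real N)\<^sup>2 * (S_N lam N (rwm_chain lam Psi l N x0 xi u (Suc k))
      - S_N lam N (rwm_chain lam Psi l N x0 xi u k))\<^sup>2
    \<le> increment_majorant l N (\<Sum>i<N. (x0 i / lam i)\<^sup>2) xi k"
proof -
  let ?x = "rwm_chain lam Psi l N x0 xi u k"
  define c where "c = sqrt (2 * l\<^sup>2 / real N)"
  define e where "e i = xi (Suc k) i" for i
  define a where "a i = x0 i / lam i" for i
  define Q where "Q j = (\<Sum>i<N. xi j i * e i)" for j
  obtain \<gamma> :: "nat \<Rightarrow> real" where \<gamma>: "\<forall>j. \<gamma> j \<in> {0, 1}"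
    and x: "\<forall>i<N. ?x i = x0 i + c * lam i * (\<Sum>j\<in>{1..k}. \<gamma> j * xi j i)"
    unfolding c_def using rwm_chain_coordinates by blast
  have P: "(\<Sum>i<N. ?x i / lam i * e i) = (\<Sum>i<N. a i * e i) + c * (\<Sum>j\<in>{1..k}. \<gamma> j * Q j)"
  proof -
    have "?x i / lam i * e i = a i * e i + c * (\<Sum>j\<in>{1..k}. \<gamma> j * (xi j i * e i))" if "i < N" for i
      using x that lam[of i] unfolding a_def by (simp add: field_simps sum_distrib_right sum_distrib_left)
    then have "(\<Sum>i<N. ?x i / lam i * e i)
        = (\<Sum>i<N. a i * e i) + c * (\<Sum>i<N. \<Sum>j\<in>{1..k}. \<gamma> j * (xi j i * e i))"
      by (simp add: sum.distrib sum_distrib_left)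
    also have "(\<Sum>i<N. \<Sum>j\<in>{1..k}. \<gamma> j * (xi j i * e i)) = (\<Sum>j\<in>{1..k}. \<gamma> j * Q j)"
      unfolding Q_def by (subst sum.swap) (simp add: sum_distrib_left)
    finally show ?thesis .
  qed
  show ?thesis
  proof (cases "S_N lam N (rwm_chain lam Psi l N x0 xi u (Suc k)) = S_N lam N ?x")
    case True
    have "0 \<le> increment_majorant l N (\<Sum>i<N. (x0 i / lam i)\<^sup>2) xi k"
      by (intro increment_majorant_nonneg sum_nonneg) simp
    then show ?thesis unfolding True by simp
  next
    case False
    then have "S_N lam N (rwm_chain lam Psi l N x0 xi u (Suc k)) = S_N lam N (rwm_prop lam l N e ?x)"
      using S_N_rwm_chain_Suc_cases unfolding e_def by metis
    then have "(real N)\<^sup>2 * (S_N lam N (rwm_chain lam Psi l N x0 xi u (Suc k)) - S_N lam N ?x)\<^sup>2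
        = (real N * (S_N lam N (rwm_prop lam l N e ?x) - S_N lam N ?x))\<^sup>2"
      by (simp only: power_mult_distrib)
    also have "\<dots> = (2 * c * ((\<Sum>i<N. a i * e i) + c * (\<Sum>j\<in>{1..k}. \<gamma> j * Q j))
        + c\<^sup>2 * (\<Sum>i<N. (e i)\<^sup>2))\<^sup>2"
      unfolding S_N_rwm_prop_diff[OF lam N] c_def[symmetric] P ..
    also have "\<dots> \<le> increment_majorant l N (\<Sum>i<N. (x0 i / lam i)\<^sup>2) xi k"
      using Cauchy_Schwarz_increment_bound[OF _ \<gamma>, where J = "{1..k}" and c = c and N = N and a = a
          and e = e and Q = Q]
      unfolding increment_majorant_def a_def e_def Q_def c_def by simp
    finally show ?thesis .
  qed
qed

section \<open>Interpolation error\<close>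

lemma interpolation_error_sq_le:
  fixes f :: "real \<Rightarrow> real" and Sk :: "nat \<Rightarrow> real"
  assumes S: "\<And>k. Sk k \<ge> 0" and C: "C \<ge> 0" and v: "0 \<le> v"
    and Holder: "\<And>x y. 0 \<le> x \<Longrightarrow> 0 \<le> y \<Longrightarrow> (f x - f y)\<^sup>2 \<le> C * \<bar>x - y\<bar>"
  shows "(f (Sbar N Sk v) - f (Sinterp N Sk v))\<^sup>2
    \<le> C * \<bar>Sk (Suc (nat \<lfloor>real N * v\<rfloor>)) - Sk (nat \<lfloor>real N * v\<rfloor>)\<bar>"
proof -
  define k where "k = nat \<lfloor>real N * v\<rfloor>"
  define \<theta> where "\<theta> = real N * v - real k"
  have "real k \<le> real N * v" "real N * v < real k + 1"
    using v by (simp_all add: k_def)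
  then have \<theta>: "0 \<le> \<theta>" "\<theta> \<le> 1" by (simp_all add: \<theta>_def)
  have Sbar: "Sbar N Sk v = Sk k" unfolding Sbar_def k_def ..
  have Sinterp: "Sinterp N Sk v = \<theta> * Sk (Suc k) + (1 - \<theta>) * Sk k"
    unfolding Sinterp_def Let_def k_def[symmetric] \<theta>_def by simp
  have "0 \<le> Sinterp N Sk v" unfolding Sinterp using \<theta> S[of k] S[of "Suc k"] by simp
  then have "(f (Sbar N Sk v) - f (Sinterp N Sk v))\<^sup>2 \<le> C * \<bar>Sbar N Sk v - Sinterp N Sk v\<bar>"
    using Holder S Sbar by simp
  also have "\<bar>Sbar N Sk v - Sinterp N Sk v\<bar> = \<theta> * \<bar>Sk (Suc k) - Sk k\<bar>"
  proof -
    have "Sk k - (\<theta> * Sk (Suc k) + (1 - \<theta>) * Sk k) = \<theta> * (Sk k - Sk (Suc k))"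
      by (simp add: algebra_simps)
    then show ?thesis unfolding Sbar Sinterp using \<theta> by (simp add: abs_mult abs_minus_commute)
  qed
  also have "C * (\<theta> * \<bar>Sk (Suc k) - Sk k\<bar>) \<le> C * \<bar>Sk (Suc k) - Sk k\<bar>"
    using \<theta> C by (simp add: mult_left_le_one_le mult_left_mono)
  finally show ?thesis unfolding k_def .
qed

lemma nn_integral_interpolation_error_le:
  fixes f :: "real \<Rightarrow> real" and Sk :: "nat \<Rightarrow> real"
  assumes S: "\<And>k. Sk k \<ge> 0" and N: "N > 0" and C: "C \<ge> 0"
    and Holder: "\<And>x y. 0 \<le> x \<Longrightarrow> 0 \<le> y \<Longrightarrow> (f x - f y)\<^sup>2 \<le> C * \<bar>x - y\<bar>"
  shows "(\<integral>\<^sup>+ v. ennreal ((f (Sbar N Sk v) - f (Sinterp N Sk v))\<^sup>2) * indicator {0..T} v \<partial>lborel)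
    \<le> ennreal (\<Sum>k\<le>nat \<lfloor>real N * T\<rfloor>. C * \<bar>Sk (Suc k) - Sk k\<bar> / real N)"
proof -
  let ?K = "nat \<lfloor>real N * T\<rfloor>"
  let ?I = "\<lambda>k::nat. {real k / real N..<(real k + 1) / real N}"
  let ?g = "\<lambda>k. C * \<bar>Sk (Suc k) - Sk k\<bar>"
  have pointwise: "ennreal ((f (Sbar N Sk v) - f (Sinterp N Sk v))\<^sup>2) * indicator {0..T} v
      \<le> (\<Sum>k\<le>?K. ennreal (?g k) * indicator (?I k) v)" for v
  proof (cases "v \<in> {0..T}")
    case True
    define k where "k = nat \<lfloor>real N * v\<rfloor>"
    have "real k \<le> real N * v" "real N * v < real k + 1"
      using True by (simp_all add: k_def)
    then have v: "v \<in> ?I k"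
      using N by (auto simp: field_simps)
    have "real N * v \<le> real N * T" using True by (simp add: mult_left_mono)
    then have k: "k \<le> ?K" unfolding k_def by (intro nat_mono floor_mono)
    have "(f (Sbar N Sk v) - f (Sinterp N Sk v))\<^sup>2 \<le> ?g k"
      unfolding k_def by (rule interpolation_error_sq_le[OF S C _ Holder]) (use True in simp)
    then have "ennreal ((f (Sbar N Sk v) - f (Sinterp N Sk v))\<^sup>2) * indicator {0..T} v
        \<le> ennreal (?g k) * indicator (?I k) v"
      using True v by (simp add: ennreal_leI)
    also have "\<dots> \<le> (\<Sum>k\<le>?K. ennreal (?g k) * indicator (?I k) v)"
      by (rule member_le_sum) (use k in auto)
    finally show ?thesis .
  qed simp
  have "(\<integral>\<^sup>+ v. ennreal ((f (Sbar N Sk v) - f (Sinterp N Sk v))\<^sup>2) * indicator {0..T} v \<partial>lborel)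
      \<le> (\<integral>\<^sup>+ v. (\<Sum>k\<le>?K. ennreal (?g k) * indicator (?I k) v) \<partial>lborel)"
    by (rule nn_integral_mono) (rule pointwise)
  also have "\<dots> = (\<Sum>k\<le>?K. \<integral>\<^sup>+ v. ennreal (?g k) * indicator (?I k) v \<partial>lborel)"
    by (rule nn_integral_sum) auto
  also have "\<dots> = (\<Sum>k\<le>?K. ennreal (?g k) * emeasure lborel (?I k))"
    by (intro sum.cong refl nn_integral_cmult_indicator) auto
  also have "\<dots> = (\<Sum>k\<le>?K. ennreal (?g k / real N))"
  proof (rule sum.cong[OF refl])
    fix k
    have "emeasure lborel (?I k) = ennreal ((real k + 1) / real N - real k / real N)"
      using N by (subst emeasure_lborel_Ico) (auto simp: divide_right_mono)
    also have "(real k + 1) / real N - real k / real N = 1 / real N"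
      by (simp add: diff_divide_distrib[symmetric])
    finally have "emeasure lborel (?I k) = ennreal (1 / real N)" .
    then show "ennreal (?g k) * emeasure lborel (?I k) = ennreal (?g k / real N)"
      using C by (simp add: ennreal_mult[symmetric])
  qed
  also have "\<dots> = ennreal (\<Sum>k\<le>?K. ?g k / real N)"
    using C by (intro sum_ennreal) auto
  finally show ?thesis .
qed

lemma abs_le_half_plus_sq_div: "e > 0 \<Longrightarrow> \<bar>d::real\<bar> \<le> e / 2 + d\<^sup>2 / (2 * e)"
  using sum_squares_ge_zero[of "\<bar>d\<bar> - e" 0] by (simp add: field_simps power2_eq_square)

text \<open>The increments \<open>\<bar>S\<^sup>N\<^sub>k\<^sub>+\<^sub>1 - S\<^sup>N\<^sub>k\<bar>\<close> are traded for their squares (AM-GM with weight \<open>e\<close>),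
  since only the squares are controlled by the integrable \<open>increment_majorant\<close>.\<close>

lemma interpolation_error_le_increment_majorant:
  fixes f :: "real \<Rightarrow> real" and xi :: "nat \<Rightarrow> nat \<Rightarrow> real" and u :: "nat \<Rightarrow> real"
    and Psi l x0
  assumes lam: "\<And>i. lam i > 0" and N: "N > 0" and C: "C \<ge> 0" and e: "e > 0"
    and Holder: "\<And>x y. 0 \<le> x \<Longrightarrow> 0 \<le> y \<Longrightarrow> (f x - f y)\<^sup>2 \<le> C * \<bar>x - y\<bar>"
  defines "Sk \<equiv> \<lambda>k. S_N lam N (rwm_chain lam Psi l N x0 xi u k)"
  shows "(\<integral>\<^sup>+ v. ennreal ((f (Sbar N Sk v) - f (Sinterp N Sk v))\<^sup>2) * indicator {0..T} v \<partial>lborel)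
    \<le> ennreal (\<Sum>k\<le>nat \<lfloor>real N * T\<rfloor>. C / real N * (e / 2
        + increment_majorant l N (\<Sum>i<N. (x0 i / lam i)\<^sup>2) xi k / (2 * e * (real N)\<^sup>2)))"
proof -
  have "Sk k \<ge> 0" for k unfolding Sk_def S_N_def by (intro mult_nonneg_nonneg sum_nonneg) auto
  note error_le = nn_integral_interpolation_error_le[OF this N C Holder]
  have "C * \<bar>Sk (Suc k) - Sk k\<bar> / real N \<le> C / real N * (e / 2
      + increment_majorant l N (\<Sum>i<N. (x0 i / lam i)\<^sup>2) xi k / (2 * e * (real N)\<^sup>2))" for k
  proof -
    let ?G = "increment_majorant l N (\<Sum>i<N. (x0 i / lam i)\<^sup>2) xi k"
    have "(Sk (Suc k) - Sk k)\<^sup>2 \<le> ?G / (real N)\<^sup>2"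
      using S_N_rwm_chain_increment_sq_le[OF lam N] N unfolding Sk_def by (simp add: field_simps)
    then have "(Sk (Suc k) - Sk k)\<^sup>2 / (2 * e) \<le> ?G / (real N)\<^sup>2 / (2 * e)"
      by (rule divide_right_mono) (use e in simp)
    also have "\<dots> = ?G / (2 * e * (real N)\<^sup>2)" by (simp add: mult.commute)
    finally have "(Sk (Suc k) - Sk k)\<^sup>2 / (2 * e) \<le> ?G / (2 * e * (real N)\<^sup>2)" .
    then have "\<bar>Sk (Suc k) - Sk k\<bar> \<le> e / 2 + ?G / (2 * e * (real N)\<^sup>2)"
      using abs_le_half_plus_sq_div[OF e, of "Sk (Suc k) - Sk k"] by linarith
    then show ?thesis
      using C N mult_left_mono[of _ _ "C / real N"] by simp
  qed
  then show ?thesis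
    by (intro order_trans[OF error_le] ennreal_leI sum_mono)
qed

section \<open>Expectations under independent Gaussian innovations\<close>

context prob_space
begin

lemma indep_vars_reindex:
  assumes ind: "indep_vars M' X (f ` I)" and f: "inj_on f I"
  shows "indep_vars (\<lambda>i. M' (f i)) (\<lambda>i. X (f i)) I"
proof -
  have "indep_sets (\<lambda>i. {X (f i) -` A \<inter> space M |A. A \<in> sets (M' (f i))}) I"
    unfolding indep_sets_def
  proof (intro conjI ballI allI impI)
    show "i \<in> I \<Longrightarrow> {X (f i) -` A \<inter> space M |A. A \<in> sets (M' (f i))} \<subseteq> events" for i
      using ind unfolding indep_vars_def2 indep_sets_def by auto
  next
    fix J A assume J: "J \<subseteq> I" "J \<noteq> {}" "finite J"
      and A: "A \<in> Pi J (\<lambda>i. {X (f i) -` A \<inter> space M |A. A \<in> sets (M' (f i))})"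
    have fJ: "inj_on f J" using inj_on_subset[OF f J(1)] .
    define B where "B = (\<lambda>j. A (the_inv_into J f j))"
    have invJ: "the_inv_into J f (f j) = j" if "j \<in> J" for j
      using the_inv_into_f_f[OF fJ that] .
    have B: "B \<in> Pi (f ` J) (\<lambda>i. {X i -` A \<inter> space M |A. A \<in> sets (M' i)})"
    proof
      fix j assume "j \<in> f ` J"
      then obtain i where "i \<in> J" "j = f i" by blast
      then show "B j \<in> {X j -` A \<inter> space M |A. A \<in> sets (M' j)}"
        using A by (auto simp: B_def invJ)
    qed
    have "indep_sets (\<lambda>i. {X i -` A \<inter> space M |A. A \<in> sets (M' i)}) (f ` I)"
      using ind unfolding indep_vars_def2 by blast
    then have "prob (\<Inter>j\<in>f ` J. B j) = (\<Prod>j\<in>f ` J. prob (B j))"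
      unfolding indep_sets_def using J B by (metis (no_types, lifting) finite_imageI image_is_empty image_mono)
    then show "prob (\<Inter>j\<in>J. A j) = (\<Prod>j\<in>J. prob (A j))"
      using fJ by (simp add: B_def invJ prod.reindex)
  qed
  then show ?thesis
    using ind unfolding indep_vars_def2 by auto
qed

lemma std_normal_moments:
  assumes D: "distributed M lborel X (\<lambda>t. ennreal (std_normal_density t))"
  shows "integrable M (\<lambda>\<omega>. X \<omega> ^ n)"
    and "expectation (\<lambda>\<omega>. X \<omega>) = 0"
    and "expectation (\<lambda>\<omega>. (X \<omega>)\<^sup>2) = 1"
    and "expectation (\<lambda>\<omega>. X \<omega> ^ 4) = 3"
proof -
  show "integrable M (\<lambda>\<omega>. X \<omega> ^ n)"
    using distributed_integrable[OF D, of "\<lambda>x. x ^ n"] integrable_std_normal_moment[of n] by simp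
  have "expectation (\<lambda>\<omega>. X \<omega> ^ (2 * 0 + 1)) = 0"
    using distributed_integral[OF D, of "\<lambda>x. x ^ (2 * 0 + 1)"] integral_std_normal_moment_odd[of 0]
    by simp
  then show "expectation (\<lambda>\<omega>. X \<omega>) = 0" by simp
  have "expectation (\<lambda>\<omega>. X \<omega> ^ (2 * 1)) = fact (2 * 1) / (2 ^ 1 * fact 1)"
    using distributed_integral[OF D, of "\<lambda>x. x ^ (2 * 1)"] integral_std_normal_moment_even[of 1]
    by simp
  then show "expectation (\<lambda>\<omega>. (X \<omega>)\<^sup>2) = 1" by simp
  have "expectation (\<lambda>\<omega>. X \<omega> ^ (2 * 2)) = fact (2 * 2) / (2 ^ 2 * fact 2)"
    using distributed_integral[OF D, of "\<lambda>x. x ^ (2 * 2)"] integral_std_normal_moment_even[of 2]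
    by simp
  then show "expectation (\<lambda>\<omega>. X \<omega> ^ 4) = 3" by (simp add: fact_numeral)
qed

lemma indep_vars_prod_power:
  fixes Y :: "'i \<Rightarrow> 'a \<Rightarrow> real"
  assumes ind: "indep_vars (\<lambda>_. borel) Y UNIV"
    and int: "\<And>p n. p \<in> J \<Longrightarrow> integrable M (\<lambda>\<omega>. Y p \<omega> ^ n)"
    and J: "finite J"
  shows "integrable M (\<lambda>\<omega>. \<Prod>p\<in>J. Y p \<omega> ^ e p)"
    and "expectation (\<lambda>\<omega>. \<Prod>p\<in>J. Y p \<omega> ^ e p) = (\<Prod>p\<in>J. expectation (\<lambda>\<omega>. Y p \<omega> ^ e p))"
proof -
  have ind': "indep_vars (\<lambda>_. borel) (\<lambda>p \<omega>. Y p \<omega> ^ e p) J"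
    by (rule indep_vars_compose2[OF indep_vars_subset[OF ind]]) auto
  show "integrable M (\<lambda>\<omega>. \<Prod>p\<in>J. Y p \<omega> ^ e p)"
    by (rule indep_vars_integrable[OF J ind' int])
  show "expectation (\<lambda>\<omega>. \<Prod>p\<in>J. Y p \<omega> ^ e p) = (\<Prod>p\<in>J. expectation (\<lambda>\<omega>. Y p \<omega> ^ e p))"
    by (rule indep_vars_lebesgue_integral[OF J ind' int])
qed

lemma std_normal_array_cross_moment:
  fixes z :: "nat \<Rightarrow> nat \<Rightarrow> 'a \<Rightarrow> real"
  assumes ind: "indep_vars (\<lambda>_. borel) (\<lambda>(k, i). z k i) UNIV"
    and D: "\<And>k i. distributed M lborel (z k i) (\<lambda>t. ennreal (std_normal_density t))"
    and jm: "j \<noteq> m"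
  shows "integrable M (\<lambda>\<omega>. z j i \<omega> * z m i \<omega> * (z j i' \<omega> * z m i' \<omega>))"
    and "expectation (\<lambda>\<omega>. z j i \<omega> * z m i \<omega> * (z j i' \<omega> * z m i' \<omega>)) = (if i = i' then 1 else 0)"
proof -
  let ?Y = "\<lambda>(k, i). z k i"
  have int: "\<And>p n. integrable M (\<lambda>\<omega>. ?Y p \<omega> ^ n)"
    using std_normal_moments(1)[OF D] by auto
  have "integrable M (\<lambda>\<omega>. z j i \<omega> * z m i \<omega> * (z j i' \<omega> * z m i' \<omega>))
     \<and> expectation (\<lambda>\<omega>. z j i \<omega> * z m i \<omega> * (z j i' \<omega> * z m i' \<omega>)) = (if i = i' then 1 else 0)"
  proof (cases "i = i'")
    case True
    let ?J = "{(j, i), (m, i)}"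
    have eq: "(\<lambda>\<omega>. z j i \<omega> * z m i \<omega> * (z j i' \<omega> * z m i' \<omega>)) = (\<lambda>\<omega>. \<Prod>p\<in>?J. ?Y p \<omega> ^ 2)"
      using True jm by (auto simp: power2_eq_square mult_ac)
    have "expectation (\<lambda>\<omega>. \<Prod>p\<in>?J. ?Y p \<omega> ^ 2) = (\<Prod>p\<in>?J. expectation (\<lambda>\<omega>. ?Y p \<omega> ^ 2))"
      by (rule indep_vars_prod_power(2)[OF ind int]) auto
    also have "\<dots> = 1" using jm std_normal_moments(3)[OF D] by simp
    moreover have "integrable M (\<lambda>\<omega>. \<Prod>p\<in>?J. ?Y p \<omega> ^ 2)"
      by (rule indep_vars_prod_power(1)[OF ind int]) auto
    ultimately show ?thesis using True unfolding eq by auto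
  next
    case False
    let ?J = "{(j, i), (m, i), (j, i'), (m, i')}"
    have eq: "(\<lambda>\<omega>. z j i \<omega> * z m i \<omega> * (z j i' \<omega> * z m i' \<omega>)) = (\<lambda>\<omega>. \<Prod>p\<in>?J. ?Y p \<omega> ^ 1)"
      using False jm by (auto simp: mult_ac)
    have "expectation (\<lambda>\<omega>. \<Prod>p\<in>?J. ?Y p \<omega> ^ 1) = (\<Prod>p\<in>?J. expectation (\<lambda>\<omega>. ?Y p \<omega> ^ 1))"
      by (rule indep_vars_prod_power(2)[OF ind int]) auto
    also have "\<dots> = 0" using jm False std_normal_moments(2)[OF D] by simp
    moreover have "integrable M (\<lambda>\<omega>. \<Prod>p\<in>?J. ?Y p \<omega> ^ 1)"
      by (rule indep_vars_prod_power(1)[OF ind int]) auto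
    ultimately show ?thesis using False unfolding eq by auto
  qed
  then show "integrable M (\<lambda>\<omega>. z j i \<omega> * z m i \<omega> * (z j i' \<omega> * z m i' \<omega>))"
    and "expectation (\<lambda>\<omega>. z j i \<omega> * z m i \<omega> * (z j i' \<omega> * z m i' \<omega>)) = (if i = i' then 1 else 0)"
    by auto
qed

lemma std_normal_array_sq_inner_product:
  fixes z :: "nat \<Rightarrow> nat \<Rightarrow> 'a \<Rightarrow> real"
  assumes ind: "indep_vars (\<lambda>_. borel) (\<lambda>(k, i). z k i) UNIV"
    and D: "\<And>k i. distributed M lborel (z k i) (\<lambda>t. ennreal (std_normal_density t))"
    and jm: "j \<noteq> m"
  shows "integrable M (\<lambda>\<omega>. (\<Sum>i<N. z j i \<omega> * z m i \<omega>)\<^sup>2)"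
    and "expectation (\<lambda>\<omega>. (\<Sum>i<N. z j i \<omega> * z m i \<omega>)\<^sup>2) = real N"
proof -
  have sq: "(\<lambda>\<omega>. (\<Sum>i<N. z j i \<omega> * z m i \<omega>)\<^sup>2)
      = (\<lambda>\<omega>. \<Sum>i<N. \<Sum>i'<N. z j i \<omega> * z m i \<omega> * (z j i' \<omega> * z m i' \<omega>))"
    by (simp add: power2_eq_square sum_product)
  note cross = std_normal_array_cross_moment[OF ind D jm]
  show "integrable M (\<lambda>\<omega>. (\<Sum>i<N. z j i \<omega> * z m i \<omega>)\<^sup>2)"
    unfolding sq by (intro Bochner_Integration.integrable_sum cross(1))
  have "expectation (\<lambda>\<omega>. (\<Sum>i<N. z j i \<omega> * z m i \<omega>)\<^sup>2) = (\<Sum>i<N. \<Sum>i'<N. if i = i' then 1 else 0)"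
    unfolding sq by (simp add: Bochner_Integration.integrable_sum cross)
  then show "expectation (\<lambda>\<omega>. (\<Sum>i<N. z j i \<omega> * z m i \<omega>)\<^sup>2) = real N" by simp
qed

lemma expectation_increment_majorant:
  fixes z :: "nat \<Rightarrow> nat \<Rightarrow> 'a \<Rightarrow> real"
  assumes ind: "indep_vars (\<lambda>_. borel) (\<lambda>(k, i). z k i) UNIV"
    and D: "\<And>k i. distributed M lborel (z k i) (\<lambda>t. ennreal (std_normal_density t))"
  shows "integrable M (\<lambda>\<omega>. increment_majorant l N a (\<lambda>k i. z k i \<omega>) k)"
    and "expectation (\<lambda>\<omega>. increment_majorant l N a (\<lambda>k i. z k i \<omega>) k)
      = 16 * (2 * l\<^sup>2 / real N) * a * real N + 16 * (2 * l\<^sup>2 / real N)\<^sup>2 * real k * (real k * real N)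
        + 2 * (2 * l\<^sup>2 / real N)\<^sup>2 * real N * (3 * real N)"
proof -
  note moments = std_normal_moments[OF D]
  note inner = std_normal_array_sq_inner_product[OF ind D]
  have I1: "integrable M (\<lambda>\<omega>. \<Sum>i<N. (z (Suc k) i \<omega>)\<^sup>2)"
    by (intro Bochner_Integration.integrable_sum moments(1))
  have I2: "integrable M (\<lambda>\<omega>. \<Sum>j\<in>{1..k}. (\<Sum>i<N. z j i \<omega> * z (Suc k) i \<omega>)\<^sup>2)"
    by (intro Bochner_Integration.integrable_sum inner(1)) auto
  have I3: "integrable M (\<lambda>\<omega>. \<Sum>i<N. (z (Suc k) i \<omega>) ^ 4)"
    by (intro Bochner_Integration.integrable_sum moments(1))
  show "integrable M (\<lambda>\<omega>. increment_majorant l N a (\<lambda>k i. z k i \<omega>) k)"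
    unfolding increment_majorant_def
    by (intro Bochner_Integration.integrable_add integrable_mult_right I1 I2 I3)
  have E2: "expectation (\<lambda>\<omega>. \<Sum>j\<in>{1..k}. (\<Sum>i<N. z j i \<omega> * z (Suc k) i \<omega>)\<^sup>2) = real k * real N"
    by (simp add: Bochner_Integration.integral_sum inner)
  show "expectation (\<lambda>\<omega>. increment_majorant l N a (\<lambda>k i. z k i \<omega>) k)
      = 16 * (2 * l\<^sup>2 / real N) * a * real N + 16 * (2 * l\<^sup>2 / real N)\<^sup>2 * real k * (real k * real N)
        + 2 * (2 * l\<^sup>2 / real N)\<^sup>2 * real N * (3 * real N)"
    unfolding increment_majorant_def using I2[simplified] E2[simplified]
    by (simp add: Bochner_Integration.integral_add Bochner_Integration.integral_sum
        integrable_mult_right I1 I3 moments)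
qed

lemma expectation_increment_majorant_le:
  fixes z :: "nat \<Rightarrow> nat \<Rightarrow> 'a \<Rightarrow> real"
  assumes ind: "indep_vars (\<lambda>_. borel) (\<lambda>(k, i). z k i) UNIV"
    and D: "\<And>k i. distributed M lborel (z k i) (\<lambda>t. ennreal (std_normal_density t))"
    and N: "N \<ge> 1" and a: "0 \<le> a" "a \<le> real N * B" and k: "real k \<le> real N * T"
  shows "expectation (\<lambda>\<omega>. increment_majorant l N a (\<lambda>k i. z k i \<omega>) k)
    \<le> (32 * l\<^sup>2 * B + 64 * l ^ 4 * T\<^sup>2 + 24 * l ^ 4) * real N"
proof -
  have Np: "real N > 0" using N by simp
  have "32 * l\<^sup>2 * a \<le> 32 * l\<^sup>2 * B * real N"
    using a mult_left_mono[of a "real N * B" "32 * l\<^sup>2"] by (simp add: mult_ac)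
  moreover have "64 * l ^ 4 * ((real k)\<^sup>2 / real N) \<le> 64 * l ^ 4 * (T\<^sup>2 * real N)"
  proof -
    have "(real k)\<^sup>2 / real N \<le> (real N * T)\<^sup>2 / real N"
      using k by (intro divide_right_mono power_mono) auto
    also have "(real N * T)\<^sup>2 / real N = T\<^sup>2 * real N" using Np by (simp add: power2_eq_square)
    finally show ?thesis by (rule mult_left_mono) simp
  qed
  moreover have "24 * l ^ 4 \<le> 24 * l ^ 4 * real N"
    using N mult_left_mono[of 1 "real N" "24 * l ^ 4"] by simp
  moreover have "expectation (\<lambda>\<omega>. increment_majorant l N a (\<lambda>k i. z k i \<omega>) k)
      = 32 * l\<^sup>2 * a + 64 * l ^ 4 * ((real k)\<^sup>2 / real N) + 24 * l ^ 4"
    unfolding expectation_increment_majorant(2)[OF ind D] using Np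
    by (simp add: field_simps power2_eq_square power4_eq_xxxx)
  ultimately show ?thesis by (simp add: algebra_simps)
qed

lemma expected_interpolation_error_le:
  fixes z :: "nat \<Rightarrow> nat \<Rightarrow> 'a \<Rightarrow> real" and u :: "'a \<Rightarrow> nat \<Rightarrow> real" and f :: "real \<Rightarrow> real"
    and Psi l
  assumes ind: "indep_vars (\<lambda>_. borel) (\<lambda>(k, i). z k i) UNIV"
    and D: "\<And>k i. distributed M lborel (z k i) (\<lambda>t. ennreal (std_normal_density t))"
    and lam: "\<And>i. lam i > 0" and N: "N \<ge> 1" and T: "T > 0"
    and B: "1 / real N * (\<Sum>i<N. (x0 i)\<^sup>2 / (lam i)\<^sup>2) \<le> B"
    and C: "C \<ge> 0" and Holder: "\<And>x y. 0 \<le> x \<Longrightarrow> 0 \<le> y \<Longrightarrow> (f x - f y)\<^sup>2 \<le> C * \<bar>x - y\<bar>"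
  defines "Sk \<equiv> \<lambda>\<omega> k. S_N lam N (rwm_chain lam Psi l N x0 (\<lambda>k i. z k i \<omega>) (u \<omega>) k)"
  shows "(\<integral>\<^sup>+ \<omega>. (\<integral>\<^sup>+ v. ennreal ((f (Sbar N (Sk \<omega>) v) - f (Sinterp N (Sk \<omega>) v))\<^sup>2)
      * indicator {0..T} v \<partial>lborel) \<partial>M)
    \<le> ennreal ((T + 1) * C * (1 + 32 * l\<^sup>2 * B + 64 * l ^ 4 * T\<^sup>2 + 24 * l ^ 4) / (2 * sqrt (real N)))"
proof -
  define K where "K = nat \<lfloor>real N * T\<rfloor>"
  define e where "e = 1 / sqrt (real N)"
  define a where "a = (\<Sum>i<N. (x0 i / lam i)\<^sup>2)"
  define C1 where "C1 = 32 * l\<^sup>2 * B + 64 * l ^ 4 * T\<^sup>2 + 24 * l ^ 4"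
  define G where "G k \<omega> = increment_majorant l N a (\<lambda>k i. z k i \<omega>) k" for k \<omega>
  define H where "H \<omega> = (\<Sum>k\<le>K. C / real N * (e / 2 + G k \<omega> / (2 * e * (real N)\<^sup>2)))" for \<omega>
  have Np: "real N > 0" and e: "e > 0" using N by (auto simp: e_def)
  have a: "0 \<le> a" "a \<le> real N * B"
    using B Np by (auto simp: a_def power_divide field_simps intro: sum_nonneg)
  have K: "real K \<le> real N * T" using T by (simp add: K_def)
  have "B \<ge> 0" using a Np by (meson order_trans zero_le_mult_iff not_le)
  then have C1: "C1 \<ge> 0" by (simp add: C1_def)
  have "(\<integral>\<^sup>+ \<omega>. (\<integral>\<^sup>+ v. ennreal ((f (Sbar N (Sk \<omega>) v) - f (Sinterp N (Sk \<omega>) v))\<^sup>2)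
      * indicator {0..T} v \<partial>lborel) \<partial>M) \<le> (\<integral>\<^sup>+ \<omega>. ennreal (H \<omega>) \<partial>M)"
    unfolding Sk_def H_def G_def a_def K_def using N
    by (intro nn_integral_mono interpolation_error_le_increment_majorant[OF lam _ C e Holder]) auto
  also have "\<dots> = ennreal (expectation H)"
    unfolding H_def G_def using C e a(1) increment_majorant_nonneg
    by (intro nn_integral_eq_integral AE_I2 sum_nonneg mult_nonneg_nonneg add_nonneg_nonneg
        Bochner_Integration.integrable_sum Bochner_Integration.integrable_add integrable_mult_right
        integrable_divide_zero expectation_increment_majorant(1)[OF ind D]) auto
  also have "expectation H \<le> (T + 1) * C * (1 + C1) / (2 * sqrt (real N))"
  proof -
    have "expectation H = (\<Sum>k\<le>K. C / real N * (e / 2 + expectation (G k) / (2 * e * (real N)\<^sup>2)))"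
      unfolding H_def G_def
      by (simp add: Bochner_Integration.integral_sum Bochner_Integration.integral_add prob_space
          expectation_increment_majorant(1)[OF ind D])
    also have "\<dots> \<le> (\<Sum>k\<le>K. C / real N * (e / 2 + C1 * real N / (2 * e * (real N)\<^sup>2)))"
    proof (intro sum_mono mult_left_mono add_left_mono divide_right_mono)
      fix k assume "k \<in> {..K}"
      then have "real k \<le> real N * T" using K by simp
      then show "expectation (G k) \<le> C1 * real N"
        unfolding G_def C1_def by (rule expectation_increment_majorant_le[OF ind D N a])
    qed (use C e in auto)
    also have "\<dots> = (real K + 1) / real N * (C * (1 + C1) / (2 * sqrt (real N)))"
      using Np by (simp add: e_def field_simps power2_eq_square)
    also have "\<dots> \<le> (T + 1) * (C * (1 + C1) / (2 * sqrt (real N)))"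
      using K C C1 Np by (intro mult_right_mono) (auto simp: field_simps)
    finally show ?thesis by simp
  qed
  finally show ?thesis
    by (simp add: C1_def add.assoc ennreal_leI)
qed

end

theorem lemma7p3:
  fixes M :: "'a measure"
    and xi :: "nat \<Rightarrow> nat \<Rightarrow> nat \<Rightarrow> 'a \<Rightarrow> real"
    and U :: "nat \<Rightarrow> nat \<Rightarrow> 'a \<Rightarrow> real"
    and lam :: "nat \<Rightarrow> real" and Psi :: "(nat \<Rightarrow> real) \<Rightarrow> real"
    and kappa s l T :: real and x0 :: "nat \<Rightarrow> real"
  assumes A: "assumptions_A kappa lam s Psi"
    and l: "l > 0"
    and x0: "in_Hs_cap s lam x0"
    and T: "T > 0"
    and M: "prob_space M"
    and xi_dist: "\<And>N k i. distributed M lborel (xi N k i) (\<lambda>t. ennreal (std_normal_density t))"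
    and U_dist: "\<And>N k. distributed M lborel (U N k) (\<lambda>t. indicator {0..1} t)"
    and indep: "\<And>N. prob_space.indep_vars M (\<lambda>_. borel)
          (\<lambda>j. case j of Inl (k, i) \<Rightarrow> xi N k i | Inr k \<Rightarrow> U N k) UNIV"
  shows "(\<lambda>N. \<integral>\<^sup>+ \<omega>. (\<integral>\<^sup>+ v. ennreal
            ((A_l l (Sbar N (\<lambda>k. S_N lam N (rwm_chain lam Psi l N x0 (\<lambda>k i. xi N k i \<omega>) (\<lambda>k. U N k \<omega>) k)) v)
            - A_l l (Sinterp N (\<lambda>k. S_N lam N (rwm_chain lam Psi l N x0 (\<lambda>k i. xi N k i \<omega>) (\<lambda>k. U N k \<omega>) k)) v))\<^sup>2)
            * indicator {0..T} v \<partial>lborel) \<partial>M)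
         \<longlonglongrightarrow> 0"
  \<comment> \<open>The uniforms \<open>U\<close> only decide acceptance, over which the bounds are uniform.\<close>
proof -
  interpret prob_space M by (rule M)
  have lam: "\<And>i. lam i > 0" using A by (simp add: assumptions_A_def)
  obtain C where C: "C \<ge> 0"
    and Holder: "\<And>x y. 0 \<le> x \<Longrightarrow> 0 \<le> y \<Longrightarrow> (A_l l x - A_l l y)\<^sup>2 \<le> C * \<bar>x - y\<bar>"
    using A_l_half_Holder[OF l] by blast
  have "Bseq (\<lambda>N. 1 / real N * (\<Sum>i<N. (x0 i)\<^sup>2 / (lam i)\<^sup>2))"
    using x0 by (simp add: in_Hs_cap_def convergent_imp_Bseq)
  then obtain B where "\<And>N. norm (1 / real N * (\<Sum>i<N. (x0 i)\<^sup>2 / (lam i)\<^sup>2)) \<le> B"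
    by (meson BseqE)
  then have B: "\<And>N. 1 / real N * (\<Sum>i<N. (x0 i)\<^sup>2 / (lam i)\<^sup>2) \<le> B"
    unfolding real_norm_def using abs_ge_self order_trans by blast
  have ind: "indep_vars (\<lambda>_. borel) (\<lambda>(k, i). xi N k i) UNIV" for N
    using indep_vars_reindex[OF indep_vars_subset[OF indep[of N]], of Inl UNIV]
    by (simp add: case_prod_beta')
  let ?c = "(T + 1) * C * (1 + 32 * l\<^sup>2 * B + 64 * l ^ 4 * T\<^sup>2 + 24 * l ^ 4)"
  have "(\<lambda>N. ?c / (2 * sqrt (real N))) \<longlonglongrightarrow> 0"
    by real_asymp
  then have lim: "(\<lambda>N. ennreal (?c / (2 * sqrt (real N)))) \<longlonglongrightarrow> 0"
    using tendsto_ennrealI by fastforce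
  show ?thesis
    by (rule tendsto_sandwich[OF _ _ tendsto_const lim])
       (simp, rule eventually_sequentiallyI[of 1],
        rule expected_interpolation_error_le[OF ind xi_dist lam _ T B C Holder])
qed

end
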